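(* For any qubit state $\rho$ (density matrix on $\mathbb{C}^2$), $$F_c(\rho)=\frac{1}{2}+\frac{1}{2}\,C_{\mathcal{R}}(\rho).$$
   Context: Coherence is taken with respect to the computational basis $\{|0\rangle,|1\rangle\}$; incoherent states are those diagonal in this basis, forming the set $\mathcal{I}$. The set of maximally coherent qubit states is $\mathcal{M}=\{\frac{1}{\sqrt2}(e^{\mathfrak{i}\theta_0}|0\rangle+e^{\mathfrak{i}\theta_1}|1\rangle):\theta_0,\theta_1\in[0,2\pi]\}$, and the coherence fraction is $F_c(\rho)=\max_{|\phi\rangle\in\mathcal{M}}\langle\phi|\rho|\phi\rangle$. The robustness of coherence is $C_{\mathcal{R}}(\rho)=\min_{\tau}\{s\ge 0: \frac{\rho+s\tau}{1+s}\in\mathcal{I}\}$, where the minimum is over all states $\tau$. *)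

theory Defs
  imports Complex_Main "Jordan_Normal_Form.Schur_Decomposition"
begin

(* Matrices are Jordan_Normal_Form matrices; index 0 corresponds to |0>, index 1 to |1>. *)

definition expval :: "complex mat \<Rightarrow> complex vec \<Rightarrow> complex" where
  "expval A v = (\<Sum>i<dim_vec v. \<Sum>j<dim_vec v. cnj (v $ i) * A $$ (i, j) * v $ j)"

definition density_matrix :: "nat \<Rightarrow> complex mat \<Rightarrow> bool" where
  "density_matrix n \<rho> \<longleftrightarrow> \<rho> \<in> carrier_mat n n \<and> mat_adjoint \<rho> = \<rho> \<and>
     (\<forall>v \<in> carrier_vec n. 0 \<le> Re (expval \<rho> v)) \<and> (\<Sum>i<n. \<rho> $$ (i, i)) = 1"

definition qubit_state :: "complex mat \<Rightarrow> bool" where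
  "qubit_state \<rho> \<longleftrightarrow> density_matrix 2 \<rho>"

definition incoherent :: "complex mat \<Rightarrow> bool" where
  "incoherent \<delta> \<longleftrightarrow> qubit_state \<delta> \<and> diagonal_mat \<delta>"

definition max_coh_vec :: "real \<Rightarrow> real \<Rightarrow> complex vec" where
  "max_coh_vec t0 t1 = vec 2 (\<lambda>i. (if i = 0 then cis t0 else cis t1) / complex_of_real (sqrt 2))"

definition max_coherent_states :: "complex vec set" where
  "max_coherent_states = {max_coh_vec t0 t1 | t0 t1. t0 \<in> {0..2*pi} \<and> t1 \<in> {0..2*pi}}"

text \<open>Coherence fraction F_c(rho) = max over maximally coherent phi of <phi|rho|phi>
  (a real number for Hermitian rho; the maximum is attained, so it equals the supremum).\<close>
definition coherence_fraction :: "complex mat \<Rightarrow> real" where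
  "coherence_fraction \<rho> = (SUP \<phi>\<in>max_coherent_states. Re (expval \<rho> \<phi>))"

definition robustness_coherence :: "complex mat \<Rightarrow> real" where
  "robustness_coherence \<rho> = Inf {s::real. 0 \<le> s \<and> (\<exists>\<tau>. qubit_state \<tau> \<and>
      incoherent (complex_of_real (1 / (1 + s)) \<cdot>\<^sub>m (\<rho> + complex_of_real s \<cdot>\<^sub>m \<tau>)))}"

end

(*
  Both quantities are governed by the off-diagonal entry c = \<rho>01 of the qubit state \<rho>.
  Against a maximally coherent vector \<rho> has expectation 1/2 + Re (c e^(i(t1 - t0))),
  so F_c(\<rho>) = 1/2 + |c|, attained when the phases cancel the argument of c.
  A mixture (\<rho> + s \<tau>)/(1 + s) of two states is again a state, and it is diagonal
  iff c + s \<tau>01 = 0. Positivity forces |\<tau>01| \<le> 1/2 for every state \<tau>, hence s \<ge> 2|c|;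
  the state \<tau> with diagonal 1/2 and off-diagonal entry -c/s attains s = 2|c|.
  So C_R(\<rho>) = 2|c|.
*)
theory Submission
  imports Defs
begin

lemma mult_cis_neg_Arg: "z * cis (- Arg z) = complex_of_real (cmod z)"
  by (subst (1) rcis_cmod_Arg[symmetric]) (simp add: rcis_def cis_mult mult.assoc)

lemma mat_adjoint_index:
  assumes "A \<in> carrier_mat n n" "i < n" "j < n"
  shows "mat_adjoint A $$ (i, j) = cnj (A $$ (j, i))"
  using assms unfolding mat_adjoint_def by (simp add: mat_of_rows_index)

lemma mat_adjoint_eq_iff:
  assumes "A \<in> carrier_mat n n"
  shows "mat_adjoint A = A \<longleftrightarrow> (\<forall>i<n. \<forall>j<n. A $$ (j, i) = cnj (A $$ (i, j)))"
proof
  assume "mat_adjoint A = A"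
  then show "\<forall>i<n. \<forall>j<n. A $$ (j, i) = cnj (A $$ (i, j))"
    using mat_adjoint_index[OF assms] by metis
next
  assume herm: "\<forall>i<n. \<forall>j<n. A $$ (j, i) = cnj (A $$ (i, j))"
  have dim: "dim_row (mat_adjoint A) = n" "dim_col (mat_adjoint A) = n"
    using assms unfolding mat_adjoint_def by auto
  show "mat_adjoint A = A"
  proof (rule eq_matI)
    fix i j assume "i < dim_row A" "j < dim_col A"
    then show "mat_adjoint A $$ (i, j) = A $$ (i, j)"
      using assms herm mat_adjoint_index by (metis carrier_matD)
  qed (use assms dim in auto)
qed

lemma expval_add:
  assumes "A \<in> carrier_mat n n" "B \<in> carrier_mat n n" "v \<in> carrier_vec n"
  shows "expval (A + B) v = expval A v + expval B v"
proof -
  have "cnj (v $ i) * (A + B) $$ (i, j) * v $ j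
      = cnj (v $ i) * A $$ (i, j) * v $ j + cnj (v $ i) * B $$ (i, j) * v $ j"
    if "i < n" "j < n" for i j
    using assms that by (simp add: distrib_left distrib_right)
  then show ?thesis
    using assms unfolding expval_def by (simp add: sum.distrib)
qed

lemma expval_smult:
  assumes "A \<in> carrier_mat n n" "v \<in> carrier_vec n"
  shows "expval (c \<cdot>\<^sub>m A) v = c * expval A v"
  using assms unfolding expval_def by (simp add: sum_distrib_left mult_ac)

lemma density_matrix_mixture:
  assumes A: "density_matrix n A" and B: "density_matrix n B" and "s \<ge> 0"
  shows "density_matrix n (complex_of_real (1 / (1 + s)) \<cdot>\<^sub>m (A + complex_of_real s \<cdot>\<^sub>m B))"
    (is "density_matrix n ?M")
proof -
  have carrier: "A \<in> carrier_mat n n" "B \<in> carrier_mat n n"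
    using A B unfolding density_matrix_def by auto
  have herm: "\<forall>i<n. \<forall>j<n. A $$ (j, i) = cnj (A $$ (i, j))"
    "\<forall>i<n. \<forall>j<n. B $$ (j, i) = cnj (B $$ (i, j))"
    using A B carrier mat_adjoint_eq_iff unfolding density_matrix_def by blast+
  have M: "?M \<in> carrier_mat n n" using carrier by simp
  moreover have "mat_adjoint ?M = ?M"
    unfolding mat_adjoint_eq_iff[OF M]
  proof (intro allI impI)
    fix i j assume ij: "i < n" "j < n"
    then have "A $$ (j, i) = cnj (A $$ (i, j))" "B $$ (j, i) = cnj (B $$ (i, j))"
      using herm by blast+
    then show "?M $$ (j, i) = cnj (?M $$ (i, j))"
      using carrier ij by simp
  qed
  moreover have "0 \<le> Re (expval ?M v)" if v: "v \<in> carrier_vec n" for v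
  proof -
    have "expval ?M v = complex_of_real (1 / (1 + s)) * expval (A + complex_of_real s \<cdot>\<^sub>m B) v"
      using carrier v by (intro expval_smult) auto
    also have "\<dots> = complex_of_real (1 / (1 + s)) * (expval A v + complex_of_real s * expval B v)"
      using carrier v by (simp add: expval_add[of _ n] expval_smult[of _ n])
    finally have "Re (expval ?M v) = (Re (expval A v) + s * Re (expval B v)) / (1 + s)"
      by simp
    then show ?thesis
      using A B v \<open>s \<ge> 0\<close> unfolding density_matrix_def by simp
  qed
  moreover have "(\<Sum>i<n. ?M $$ (i, i)) = 1"
  proof -
    have "(\<Sum>i<n. ?M $$ (i, i)) = complex_of_real (1 / (1 + s))
        * ((\<Sum>i<n. A $$ (i, i)) + complex_of_real s * (\<Sum>i<n. B $$ (i, i)))"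
      using carrier by (simp add: sum.distrib sum_distrib_left sum_divide_distrib add_divide_distrib)
    also have "\<dots> = complex_of_real (1 / (1 + s)) * complex_of_real (1 + s)"
      using A B unfolding density_matrix_def by simp
    also have "\<dots> = 1"
      using \<open>s \<ge> 0\<close> by (subst of_real_mult[symmetric]) simp
    finally show ?thesis .
  qed
  ultimately show ?thesis unfolding density_matrix_def by blast
qed

lemma expval_2:
  assumes "v \<in> carrier_vec 2"
  shows "expval M v = cnj (v $ 0) * M $$ (0, 0) * v $ 0 + cnj (v $ 0) * M $$ (0, 1) * v $ 1
    + cnj (v $ 1) * M $$ (1, 0) * v $ 0 + cnj (v $ 1) * M $$ (1, 1) * v $ 1"
  using assms unfolding expval_def by (simp add: numeral_2_eq_2 lessThan_Suc)

lemma diagonal_mat_2_iff: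
  assumes "A \<in> carrier_mat 2 2"
  shows "diagonal_mat A \<longleftrightarrow> A $$ (0, 1) = 0 \<and> A $$ (1, 0) = 0"
  using assms unfolding diagonal_mat_def by (auto simp: less_2_cases_iff)

lemma qubit_stateD:
  assumes "qubit_state \<rho>"
  shows "\<rho> \<in> carrier_mat 2 2" "\<rho> $$ (1, 0) = cnj (\<rho> $$ (0, 1))"
    "\<rho> $$ (0, 0) + \<rho> $$ (1, 1) = 1"
proof -
  show carrier: "\<rho> \<in> carrier_mat 2 2"
    using assms unfolding qubit_state_def density_matrix_def by simp
  have herm: "\<forall>i<2. \<forall>j<2. \<rho> $$ (j, i) = cnj (\<rho> $$ (i, j))"
    using assms mat_adjoint_eq_iff[OF carrier] unfolding qubit_state_def density_matrix_def by blast
  show "\<rho> $$ (1, 0) = cnj (\<rho> $$ (0, 1))"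
    using herm[rule_format, of 0 1] by simp
  show "\<rho> $$ (0, 0) + \<rho> $$ (1, 1) = 1"
    using assms unfolding qubit_state_def density_matrix_def
    by (simp add: numeral_2_eq_2 lessThan_Suc add.commute)
qed

lemma Re_expval_qubit_equal_norms:
  assumes "qubit_state \<rho>" "v \<in> carrier_vec 2" "cmod (v $ 0) = r" "cmod (v $ 1) = r"
  shows "Re (expval \<rho> v) = r\<^sup>2 + 2 * Re (cnj (v $ 0) * \<rho> $$ (0, 1) * v $ 1)"
proof -
  note \<rho> = qubit_stateD[OF assms(1)]
  have diag: "cnj (v $ k) * M * v $ k = complex_of_real (r\<^sup>2) * M" if "cmod (v $ k) = r" for k M
  proof -
    have "cnj (v $ k) * M * v $ k = M * (v $ k * cnj (v $ k))"
      by (simp add: ac_simps)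
    also have "\<dots> = M * complex_of_real (r\<^sup>2)"
      using complex_norm_square[of "v $ k"] that by simp
    finally show ?thesis
      by (simp add: mult.commute)
  qed
  define z where "z = cnj (v $ 0) * \<rho> $$ (0, 1) * v $ 1"
  have "expval \<rho> v = complex_of_real (r\<^sup>2) * (\<rho> $$ (0, 0) + \<rho> $$ (1, 1)) + (z + cnj z)"
    unfolding expval_2[OF assms(2)] diag[OF assms(3)] diag[OF assms(4)] \<rho>(2) z_def
    by (simp add: algebra_simps)
  then show ?thesis
    using \<rho>(3) unfolding z_def[symmetric] by (simp add: complex_add_cnj)
qed

lemma qubit_state_offdiag_le:
  assumes "qubit_state \<tau>"
  shows "cmod (\<tau> $$ (0, 1)) \<le> 1/2"
proof -
  define b where "b = \<tau> $$ (0, 1)"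
  define v where "v = vec 2 (\<lambda>i. if i = 0 then 1 else - cis (- Arg b))"
  have v: "v \<in> carrier_vec 2" "v $ 0 = 1" "v $ 1 = - cis (- Arg b)"
    unfolding v_def by simp_all
  have z: "cnj (v $ 0) * \<tau> $$ (0, 1) * v $ 1 = - complex_of_real (cmod b)"
    using v mult_cis_neg_Arg[of b] unfolding b_def by simp
  have "0 \<le> Re (expval \<tau> v)"
    using assms v(1) unfolding qubit_state_def density_matrix_def by blast
  also have "Re (expval \<tau> v) = 1\<^sup>2 + 2 * Re (cnj (v $ 0) * \<tau> $$ (0, 1) * v $ 1)"
    by (rule Re_expval_qubit_equal_norms[OF assms v(1)]) (simp_all add: v_def)
  also have "\<dots> = 1 - 2 * cmod b"
    unfolding z by simp
  finally show ?thesis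
    unfolding b_def by simp
qed

lemma Re_expval_max_coh_vec:
  assumes "qubit_state \<rho>"
  shows "Re (expval \<rho> (max_coh_vec t0 t1)) = 1/2 + Re (\<rho> $$ (0, 1) * cis (t1 - t0))"
proof -
  define r where "r = complex_of_real (sqrt 2)"
  have v: "max_coh_vec t0 t1 \<in> carrier_vec 2"
    "max_coh_vec t0 t1 $ 0 = cis t0 / r" "max_coh_vec t0 t1 $ 1 = cis t1 / r"
    unfolding max_coh_vec_def r_def by simp_all
  have r: "cnj r = r" "r * r = 2" "cmod r = sqrt 2"
    unfolding r_def by (simp_all flip: of_real_mult)
  have "Re (expval \<rho> (max_coh_vec t0 t1))
      = (1 / sqrt 2)\<^sup>2 + 2 * Re (cnj (cis t0 / r) * \<rho> $$ (0, 1) * (cis t1 / r))"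
    using Re_expval_qubit_equal_norms[OF assms v(1), of "1 / sqrt 2"] v r by (simp add: norm_divide)
  also have "cnj (cis t0 / r) * \<rho> $$ (0, 1) * (cis t1 / r) = \<rho> $$ (0, 1) * cis (t1 - t0) / 2"
    using r by (simp add: cis_cnj cis_mult field_simps)
  finally show ?thesis
    by (simp add: power_divide)
qed

lemma coherence_fraction_qubit:
  assumes "qubit_state \<rho>"
  shows "coherence_fraction \<rho> = 1/2 + cmod (\<rho> $$ (0, 1))"
  unfolding coherence_fraction_def
proof (rule cSup_eq_maximum)
  define c where "c = \<rho> $$ (0, 1)"
  obtain t0 t1 where t: "t0 \<in> {0..2*pi}" "t1 \<in> {0..2*pi}" "t1 - t0 = - Arg c"
  proof (cases "Arg c \<le> 0")
    case True
    then show ?thesis using Arg_bounded[of c] by (intro that[of 0 "- Arg c"]) auto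
  next
    case False
    then show ?thesis using Arg_bounded[of c] by (intro that[of "Arg c" 0]) auto
  qed
  then have "max_coh_vec t0 t1 \<in> max_coherent_states"
    unfolding max_coherent_states_def by blast
  moreover have "1/2 + cmod c = Re (expval \<rho> (max_coh_vec t0 t1))"
    unfolding Re_expval_max_coh_vec[OF assms] c_def[symmetric] t(3) mult_cis_neg_Arg by simp
  ultimately show "1/2 + cmod (\<rho> $$ (0, 1)) \<in> (\<lambda>\<phi>. Re (expval \<rho> \<phi>)) ` max_coherent_states"
    unfolding c_def by blast
next
  fix x assume "x \<in> (\<lambda>\<phi>. Re (expval \<rho> \<phi>)) ` max_coherent_states"
  then obtain t0 t1 where x: "x = Re (expval \<rho> (max_coh_vec t0 t1))"
    unfolding max_coherent_states_def by blast
  have "Re (\<rho> $$ (0, 1) * cis (t1 - t0)) \<le> cmod (\<rho> $$ (0, 1) * cis (t1 - t0))"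
    by (rule complex_Re_le_cmod)
  then show "x \<le> 1/2 + cmod (\<rho> $$ (0, 1))"
    unfolding x Re_expval_max_coh_vec[OF assms] by (simp add: norm_mult)
qed

lemma qubit_state_half_diagonal:
  assumes "cmod b \<le> 1/2"
  shows "qubit_state (mat 2 2 (\<lambda>(i, j). if i = j then 1/2 else if i = 0 then b else cnj b))"
    (is "qubit_state ?\<tau>")
  unfolding qubit_state_def density_matrix_def
proof (intro conjI ballI)
  show carrier: "?\<tau> \<in> carrier_mat 2 2" by simp
  show "mat_adjoint ?\<tau> = ?\<tau>"
    unfolding mat_adjoint_eq_iff[OF carrier] by (auto simp: less_2_cases_iff)
  show "(\<Sum>i<2. ?\<tau> $$ (i, i)) = 1"
    by (simp add: numeral_2_eq_2 lessThan_Suc)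
  fix v :: "complex vec" assume v: "v \<in> carrier_vec 2"
  define x y where "x = v $ 0" and "y = v $ 1"
  define z where "z = cnj x * b * y"
  have "expval ?\<tau> v = (cnj x * x + cnj y * y) / 2 + (z + cnj z)"
    unfolding expval_2[OF v] x_def y_def z_def by (simp add: algebra_simps)
  then have "Re (expval ?\<tau> v) = ((cmod x)\<^sup>2 + (cmod y)\<^sup>2) / 2 + 2 * Re z"
    by (simp add: cmod_power2) (simp add: power2_eq_square)
  moreover have "- (cmod x * cmod y / 2) \<le> Re z"
  proof -
    have "cmod x * cmod b * cmod y \<le> cmod x * (1/2) * cmod y"
      using assms by (intro mult_right_mono mult_left_mono) auto
    then show ?thesis
      using abs_Re_le_cmod[of z] unfolding z_def by (simp add: norm_mult)
  qed
  moreover have "cmod x * cmod y \<le> ((cmod x)\<^sup>2 + (cmod y)\<^sup>2) / 2"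
    using sum_squares_bound[of "cmod x" "cmod y"] by simp
  ultimately show "0 \<le> Re (expval ?\<tau> v)"
    by linarith
qed

lemma incoherent_mixture_iff:
  assumes \<rho>: "qubit_state \<rho>" and \<tau>: "qubit_state \<tau>" and "s \<ge> 0"
  shows "incoherent (complex_of_real (1 / (1 + s)) \<cdot>\<^sub>m (\<rho> + complex_of_real s \<cdot>\<^sub>m \<tau>))
    \<longleftrightarrow> \<rho> $$ (0, 1) + complex_of_real s * \<tau> $$ (0, 1) = 0"
    (is "incoherent ?M \<longleftrightarrow> ?c = 0")
proof -
  note \<rho>' = qubit_stateD[OF \<rho>] and \<tau>' = qubit_stateD[OF \<tau>]
  define c where "c = ?c"
  have state: "qubit_state ?M"
    using density_matrix_mixture[OF _ _ \<open>s \<ge> 0\<close>] \<rho> \<tau> unfolding qubit_state_def by blast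
  have carrier: "?M \<in> carrier_mat 2 2"
    using \<rho>'(1) \<tau>'(1) by simp
  have entries: "?M $$ (0, 1) = complex_of_real (1 / (1 + s)) * c"
    "?M $$ (1, 0) = complex_of_real (1 / (1 + s)) * cnj c"
    using \<rho>' \<tau>' unfolding c_def by simp_all
  have "complex_of_real (1 / (1 + s)) \<noteq> 0"
    using \<open>s \<ge> 0\<close> by (simp only: of_real_eq_0_iff) simp
  then have "diagonal_mat ?M \<longleftrightarrow> c = 0"
    using entries by (simp add: diagonal_mat_2_iff[OF carrier] del: of_real_divide)
  then show ?thesis
    using state unfolding incoherent_def c_def by blast
qed

lemma robustness_coherence_qubit:
  assumes "qubit_state \<rho>"
  shows "robustness_coherence \<rho> = 2 * cmod (\<rho> $$ (0, 1))"
  unfolding robustness_coherence_def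
proof (rule cInf_eq_minimum)
  define s where "s = 2 * cmod (\<rho> $$ (0, 1))"
  have "s \<ge> 0"
    unfolding s_def by simp
  \<comment> \<open>if \<rho> is diagonal, then s = 0 and division by zero gives b = 0, which still works\<close>
  define b where "b = - \<rho> $$ (0, 1) / complex_of_real s"
  define \<tau> where "\<tau> = mat 2 2 (\<lambda>(i, j). if i = j then 1/2 else if i = 0 then b else cnj b)"
  have "cmod b \<le> 1/2"
    unfolding b_def s_def by (cases "\<rho> $$ (0, 1) = 0") (simp_all add: norm_divide)
  then have \<tau>: "qubit_state \<tau>"
    unfolding \<tau>_def by (rule qubit_state_half_diagonal)
  have "\<rho> $$ (0, 1) + complex_of_real s * \<tau> $$ (0, 1) = 0"
    unfolding \<tau>_def b_def s_def by (cases "\<rho> $$ (0, 1) = 0") simp_all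
  then have "incoherent (complex_of_real (1 / (1 + s)) \<cdot>\<^sub>m (\<rho> + complex_of_real s \<cdot>\<^sub>m \<tau>))"
    using incoherent_mixture_iff[OF assms \<tau> \<open>s \<ge> 0\<close>] by blast
  with \<tau> \<open>s \<ge> 0\<close> show "2 * cmod (\<rho> $$ (0, 1)) \<in> {s. 0 \<le> s \<and> (\<exists>\<tau>. qubit_state \<tau> \<and>
      incoherent (complex_of_real (1 / (1 + s)) \<cdot>\<^sub>m (\<rho> + complex_of_real s \<cdot>\<^sub>m \<tau>)))}"
    unfolding s_def[symmetric] by blast
next
  fix s assume "s \<in> {s. 0 \<le> s \<and> (\<exists>\<tau>. qubit_state \<tau> \<and>
      incoherent (complex_of_real (1 / (1 + s)) \<cdot>\<^sub>m (\<rho> + complex_of_real s \<cdot>\<^sub>m \<tau>)))}"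
  then obtain \<tau> where "s \<ge> 0" and \<tau>: "qubit_state \<tau>"
    and "incoherent (complex_of_real (1 / (1 + s)) \<cdot>\<^sub>m (\<rho> + complex_of_real s \<cdot>\<^sub>m \<tau>))"
    by blast
  then have "\<rho> $$ (0, 1) = - (complex_of_real s * \<tau> $$ (0, 1))"
    using incoherent_mixture_iff[OF assms \<tau> \<open>s \<ge> 0\<close>] by (simp add: add_eq_0_iff)
  then have "cmod (\<rho> $$ (0, 1)) = s * cmod (\<tau> $$ (0, 1))"
    using \<open>s \<ge> 0\<close> by (simp add: norm_mult)
  also have "\<dots> \<le> s * (1/2)"
    using qubit_state_offdiag_le[OF \<tau>] \<open>s \<ge> 0\<close> by (rule mult_left_mono)
  finally show "2 * cmod (\<rho> $$ (0, 1)) \<le> s"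
    by simp
qed

theorem mainTheorem2:
  fixes \<rho> :: "complex mat"
  assumes "qubit_state \<rho>"
  shows "coherence_fraction \<rho> = 1/2 + 1/2 * robustness_coherence \<rho>"
  using coherence_fraction_qubit[OF assms] robustness_coherence_qubit[OF assms] by simp

end
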